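(* Let $G$ be a multigraph in the class $\mathfrak{SP}'$. Then the reliability polynomial $R_G(q)$ is Schur quasi-stable, i.e. every $q\in\mathbb{C}$ with $R_G(q)=0$ satisfies $|q|\le 1$.
   Context: Multigraphs are finite and may have loops and multiple edges. For a multigraph $G$ and $0\le q\le 1$, let $\mathcal{G}(q)$ be the random spanning subgraph of $G$ obtained by deleting each edge independently with probability $q$; the reliability function $R_G(q)$ is the probability that $\mathcal{G}(q)$ is connected. It is a polynomial in $q$, and it is regarded as a polynomial over $\mathbb{C}$. The class $\mathfrak{SP}$ of series-parallel networks is defined recursively. Each member has a distinguished unordered pair $\{s,t\}$ of distinct vertices, its terminals. A single edge joining its two terminals is in $\mathfrak{SP}$. If $G,G'\in\mathfrak{SP}$ have terminals $\{s,t\}$ and $\{s',t'\}$, no common edges, and only the vertex $t=s'$ in common, then $G\cup G'$ is in $\mathfrak{SP}$ (series connection) with terminals $\{s,t'\}$. If $G,G'\in\mathfrak{SP}$ have no common edges and only the vertices $s=s'$ and $t=t'$ in common, then $G\cup G'$ is in $\mathfrak{SP}$ (parallel connection) with terminals $\{s,t\}$. The class $\mathfrak{SP}'$ consists of the connected multigraphs every two-connected component of which is in $\mathfrak{SP}$ for some choice of terminals. *)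

theory Defs
  imports "HOL-Computational_Algebra.Polynomial" Complex_Main
begin

text \<open>A multigraph is given by a vertex set V, an edge set E (edges are abstract
  objects, so parallel edges are allowed) and an incidence map inc assigning to every
  edge the set of its end vertices (a one-element set for a loop).\<close>

definition multigraph :: "'v set \<Rightarrow> 'e set \<Rightarrow> ('e \<Rightarrow> 'v set) \<Rightarrow> bool" where
  "multigraph V E inc \<longleftrightarrow> finite V \<and> finite E \<and>
     (\<forall>e\<in>E. inc e \<subseteq> V \<and> (card (inc e) = 1 \<or> card (inc e) = 2))"

definition mg_connected :: "'v set \<Rightarrow> 'e set \<Rightarrow> ('e \<Rightarrow> 'v set) \<Rightarrow> bool" where
  "mg_connected V A inc \<longleftrightarrow> V \<noteq> {} \<and>
     (\<forall>u\<in>V. \<forall>v\<in>V. (\<lambda>x y. \<exists>e\<in>A. inc e = {x, y})\<^sup>*\<^sup>* u v)"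

text \<open>Reliability polynomial: probability that the random spanning subgraph,
  where each edge is deleted independently with probability q, is connected.\<close>
definition reliability :: "'v set \<Rightarrow> 'e set \<Rightarrow> ('e \<Rightarrow> 'v set) \<Rightarrow> complex poly" where
  "reliability V E inc =
     (\<Sum>A\<in>{A. A \<subseteq> E \<and> mg_connected V A inc}.
        [:1, -1:] ^ card A * [:0, 1:] ^ (card E - card A))"

text \<open>Series-parallel networks with (ordered representation of the unordered)
  terminal pair s, t.\<close>
inductive sp :: "'v set \<Rightarrow> 'e set \<Rightarrow> ('e \<Rightarrow> 'v set) \<Rightarrow> 'v \<Rightarrow> 'v \<Rightarrow> bool" where
  edge: "s \<noteq> t \<Longrightarrow> inc e = {s, t} \<Longrightarrow> sp {s, t} {e} inc s t"
| swap: "sp V E inc s t \<Longrightarrow> sp V E inc t s"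
| series: "sp V E inc s t \<Longrightarrow> sp V' E' inc' t t' \<Longrightarrow> E \<inter> E' = {} \<Longrightarrow> V \<inter> V' = {t} \<Longrightarrow>
     (\<forall>e\<in>E. inc'' e = inc e) \<Longrightarrow> (\<forall>e\<in>E'. inc'' e = inc' e) \<Longrightarrow>
     sp (V \<union> V') (E \<union> E') inc'' s t'"
| parallel: "sp V E inc s t \<Longrightarrow> sp V' E' inc' s t \<Longrightarrow> E \<inter> E' = {} \<Longrightarrow> V \<inter> V' = {s, t} \<Longrightarrow>
     (\<forall>e\<in>E. inc'' e = inc e) \<Longrightarrow> (\<forall>e\<in>E'. inc'' e = inc' e) \<Longrightarrow>
     sp (V \<union> V') (E \<union> E') inc'' s t"

definition verts :: "('e \<Rightarrow> 'v set) \<Rightarrow> 'e set \<Rightarrow> 'v set" where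
  "verts inc F = (\<Union>e\<in>F. inc e)"

definition nonseparable :: "('e \<Rightarrow> 'v set) \<Rightarrow> 'e set \<Rightarrow> bool" where
  "nonseparable inc F \<longleftrightarrow> F \<noteq> {} \<and> mg_connected (verts inc F) F inc \<and>
     \<not> (\<exists>F1 F2. F1 \<union> F2 = F \<and> F1 \<inter> F2 = {} \<and> F1 \<noteq> {} \<and> F2 \<noteq> {} \<and>
            card (verts inc F1 \<inter> verts inc F2) \<le> 1)"

definition is_block :: "'e set \<Rightarrow> ('e \<Rightarrow> 'v set) \<Rightarrow> 'e set \<Rightarrow> bool" where
  "is_block E inc F \<longleftrightarrow> F \<subseteq> E \<and> nonseparable inc F \<and>
     (\<forall>F'. F \<subseteq> F' \<and> F' \<subseteq> E \<and> nonseparable inc F' \<longrightarrow> F' = F)"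

definition SP' :: "'v set \<Rightarrow> 'e set \<Rightarrow> ('e \<Rightarrow> 'v set) \<Rightarrow> bool" where
  "SP' V E inc \<longleftrightarrow> multigraph V E inc \<and> mg_connected V E inc \<and>
     (\<forall>F. is_block E inc F \<longrightarrow> (\<exists>s t. sp (verts inc F) F inc s t))"

end

(* For a series-parallel network with terminals s, t let R be its reliability and S the
   probability that the surviving edges form exactly two components, one containing s and one
   containing t.  For |q| > 1 the invariant |R + S| < |S|, equivalently Re (S / R) < -1/2, holds
   by induction: a single edge has R = 1 - q and S = q; a series connection has R = R1 R2 and
   S / R = S1 / R1 + S2 / R2; a parallel connection has R + S = (R1 + S1) (R2 + S2) and
   S = S1 S2.  In particular R does not vanish.  Reliability is multiplicative over a cut vertex,
   hence over the blocks of a graph, so it does not vanish for |q| > 1 on the class SP'. *)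

theory Submission
  imports Defs
begin

section \<open>Reachability and gluing\<close>

definition reach :: "('e \<Rightarrow> 'v set) \<Rightarrow> 'e set \<Rightarrow> 'v \<Rightarrow> 'v \<Rightarrow> bool" where
  "reach inc A = (\<lambda>x y. \<exists>e\<in>A. inc e = {x, y})\<^sup>*\<^sup>*"

definition conn :: "('e \<Rightarrow> 'v set) \<Rightarrow> 'v set \<Rightarrow> 'e set \<Rightarrow> bool" where
  "conn inc V A \<longleftrightarrow> (\<forall>u\<in>V. \<forall>v\<in>V. reach inc A u v)"

text \<open>conn and st_split are attached together with reach s t or with its negation, so gluing
  need only be analysed for attached and for reach.\<close>

definition attached :: "('e \<Rightarrow> 'v set) \<Rightarrow> 'v set \<Rightarrow> 'e set \<Rightarrow> 'v \<Rightarrow> 'v \<Rightarrow> bool" where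
  "attached inc V A s t \<longleftrightarrow> (\<forall>v\<in>V. reach inc A v s \<or> reach inc A v t)"

definition st_split :: "('e \<Rightarrow> 'v set) \<Rightarrow> 'v set \<Rightarrow> 'e set \<Rightarrow> 'v \<Rightarrow> 'v \<Rightarrow> bool" where
  "st_split inc V A s t \<longleftrightarrow> attached inc V A s t \<and> \<not> reach inc A s t"

lemma mg_connected_iff_conn: "mg_connected V A inc \<longleftrightarrow> V \<noteq> {} \<and> conn inc V A"
  unfolding mg_connected_def conn_def reach_def by simp

lemma reach_refl [simp]: "reach inc A x x"
  by (simp add: reach_def)

lemma reach_edge: "e \<in> A \<Longrightarrow> inc e = {x, y} \<Longrightarrow> reach inc A x y"
  unfolding reach_def by (rule r_into_rtranclp) blast

lemma reach_trans: "reach inc A x y \<Longrightarrow> reach inc A y z \<Longrightarrow> reach inc A x z"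
  unfolding reach_def by (rule rtranclp_trans)

lemma reach_sym: "reach inc A x y \<Longrightarrow> reach inc A y x"
proof -
  have "symp (\<lambda>x y. \<exists>e\<in>A. inc e = {x, y})"
    by (auto intro: sympI simp: insert_commute)
  then show "reach inc A x y \<Longrightarrow> reach inc A y x"
    unfolding reach_def by (rule sympD[OF symp_rtranclp])
qed

lemma reach_commute: "reach inc A x y \<longleftrightarrow> reach inc A y x"
  using reach_sym by metis

lemma reach_mono: "A \<subseteq> B \<Longrightarrow> reach inc A x y \<Longrightarrow> reach inc B x y"
  unfolding reach_def by (erule rtranclp_mono[THEN predicate2D, rotated]) blast

lemma reach_empty: "reach inc {} x y \<longleftrightarrow> x = y"
  unfolding reach_def by (auto elim: rtranclp.cases)

lemma reach_closed:
  assumes "reach inc A u v" "u \<in> V" "\<forall>e\<in>A. inc e \<subseteq> V"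
  shows "v \<in> V"
  using assms(1) unfolding reach_def
  by (induction rule: rtranclp_induct) (use assms(2,3) in auto)

lemma reach_Un_cases:
  assumes "reach inc (A1 \<union> A2) u v" "u \<in> V1"
    and "\<forall>e\<in>A1. inc e \<subseteq> V1" "\<forall>e\<in>A2. inc e \<subseteq> V2"
  shows "reach inc A1 u v \<or> (\<exists>z\<in>V1 \<inter> V2. reach inc A1 u z)"
  using assms(1) unfolding reach_def[of inc "A1 \<union> A2"]
proof (induction rule: rtranclp_induct)
  case (step y w)
  then obtain e where e: "e \<in> A1 \<union> A2" "inc e = {y, w}" by blast
  show ?case
  proof (cases "reach inc A1 u y")
    case True
    then have "y \<in> V1" using reach_closed assms(2,3) by metis
    then show ?thesis
      using True e assms(4) reach_trans[OF True reach_edge[of e A1]] by blast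
  qed (use step.IH in blast)
qed simp

lemma conn_iff_attached:
  assumes "s \<in> V" "t \<in> V"
  shows "conn inc V A \<longleftrightarrow> attached inc V A s t \<and> reach inc A s t"
  unfolding conn_def attached_def using assms by (meson reach_sym reach_trans)

lemma not_conn_and_st_split: "s \<in> V \<Longrightarrow> t \<in> V \<Longrightarrow> \<not> (conn inc V A \<and> st_split inc V A s t)"
  unfolding conn_def st_split_def by blast

lemma st_split_commute: "st_split inc V A t s \<longleftrightarrow> st_split inc V A s t"
  unfolding st_split_def attached_def using reach_commute by metis

lemma reach_Un_series_same:
  assumes "\<forall>e\<in>A1. inc e \<subseteq> V1" "\<forall>e\<in>A2. inc e \<subseteq> V2" "V1 \<inter> V2 = {x}"
    and "u \<in> V1" "v \<in> V1"
  shows "reach inc (A1 \<union> A2) u v \<longleftrightarrow> reach inc A1 u v"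
proof
  assume uv: "reach inc (A1 \<union> A2) u v"
  have "reach inc A1 u v \<or> reach inc A1 u x"
    using reach_Un_cases[OF uv assms(4,1,2)] assms(3) by auto
  moreover have "reach inc A1 v u \<or> reach inc A1 v x"
    using reach_Un_cases[OF reach_sym[OF uv] assms(5,1,2)] assms(3) by auto
  ultimately show "reach inc A1 u v"
    by (meson reach_sym reach_trans)
qed (rule reach_mono[OF Un_upper1])

lemma reach_Un_series_cross:
  assumes "\<forall>e\<in>A1. inc e \<subseteq> V1" "\<forall>e\<in>A2. inc e \<subseteq> V2" "V1 \<inter> V2 = {x}"
    and "u \<in> V1" "v \<in> V2"
  shows "reach inc (A1 \<union> A2) u v \<longleftrightarrow> reach inc A1 u x \<and> reach inc A2 x v"
proof
  assume uv: "reach inc (A1 \<union> A2) u v"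
  have "reach inc A1 u v \<or> reach inc A1 u x"
    using reach_Un_cases[OF uv assms(4,1,2)] assms(3) by auto
  then have "reach inc A1 u x"
    using reach_closed[OF _ assms(4,1), of v] assms(3,5) by auto
  moreover have "reach inc (A2 \<union> A1) v u"
    using reach_sym[OF uv] by (simp add: Un_commute)
  then have "reach inc A2 v u \<or> reach inc A2 v x"
    using reach_Un_cases[OF _ assms(5,2,1)] assms(3) by (auto simp: Int_commute)
  then have "reach inc A2 v x"
    using reach_closed[OF _ assms(5,2), of u] assms(3,4) by (metis IntI singletonD)
  then have "reach inc A2 x v" by (rule reach_sym)
  ultimately show "reach inc A1 u x \<and> reach inc A2 x v" ..
next
  assume "reach inc A1 u x \<and> reach inc A2 x v"
  then show "reach inc (A1 \<union> A2) u v"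
    by (meson reach_mono reach_trans Un_upper1 Un_upper2)
qed

lemma attached_Un_series:
  assumes "\<forall>e\<in>A1. inc e \<subseteq> V1" "\<forall>e\<in>A2. inc e \<subseteq> V2" "V1 \<inter> V2 = {t}"
    and "s \<in> V1" "t' \<in> V2"
  shows "attached inc (V1 \<union> V2) (A1 \<union> A2) s t' \<longleftrightarrow>
    attached inc V1 A1 s t \<and> attached inc V2 A2 t t' \<and> (reach inc A1 s t \<or> reach inc A2 t t')"
proof -
  let ?r = "reach inc (A1 \<union> A2)" and ?r1 = "reach inc A1" and ?r2 = "reach inc A2"
  have t: "t \<in> V1" "t \<in> V2" using assms(3) by auto
  have side1: "?r v s \<or> ?r v t' \<longleftrightarrow> ?r1 v s \<or> (?r1 v t \<and> ?r2 t t')" if "v \<in> V1" for v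
    using reach_Un_series_same[OF assms(1-3) that assms(4)]
      reach_Un_series_cross[OF assms(1-3) that assms(5)] by blast
  have "?r v t' \<longleftrightarrow> ?r2 v t'" if "v \<in> V2" for v
    using reach_Un_series_same[OF assms(2,1) _ that assms(5)] assms(3)
    by (simp add: Int_commute Un_commute)
  then have side2: "?r v s \<or> ?r v t' \<longleftrightarrow> (?r1 s t \<and> ?r2 t v) \<or> ?r2 v t'" if "v \<in> V2" for v
    using reach_Un_series_cross[OF assms(1-3) assms(4) that] reach_commute[of inc "A1 \<union> A2" v s]
      that by blast
  show ?thesis
    unfolding attached_def ball_Un using side1 side2 t
    by (meson reach_sym reach_trans)
qed

lemma reach_Un_from_terminal:
  assumes edges: "\<forall>e\<in>A1. inc e \<subseteq> V1" "\<forall>e\<in>A2. inc e \<subseteq> V2"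
    and X: "V1 \<inter> V2 \<subseteq> {s, t}" and s: "s \<in> V1" "s \<in> V2"
    and sv: "reach inc (A1 \<union> A2) s v"
  shows "reach inc A1 s v \<or> reach inc A2 s v \<or> reach inc A1 s t \<or> reach inc A2 s t"
proof -
  have across: "reach inc A s w \<or> reach inc B s t"
    if "\<forall>e\<in>A. inc e \<subseteq> U" "\<forall>e\<in>B. inc e \<subseteq> W" "U \<inter> W \<subseteq> {s, t}" "s \<in> W"
      and "e \<in> A" "inc e = {y, w}" "reach inc A s y \<or> reach inc B s y"
    for A B U W e y w
  proof (cases "reach inc A s y")
    case True
    then show ?thesis using reach_trans reach_edge that(5,6) by metis
  next
    case False
    then have "y \<in> U \<inter> W" using that reach_closed[of inc B s y W] by auto
    then have "y = s \<or> y = t" using that(3) by blast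
    then show ?thesis using False that(5-7) reach_edge by metis
  qed
  from sv show ?thesis
    unfolding reach_def[of inc "A1 \<union> A2"]
  proof (induction rule: rtranclp_induct)
    case (step y w)
    then obtain e where e: "e \<in> A1 \<union> A2" "inc e = {y, w}" by blast
    have X': "V2 \<inter> V1 \<subseteq> {s, t}" using X by blast
    show ?case
    proof (cases "reach inc A1 s y \<or> reach inc A2 s y")
      case True
      then show ?thesis
        using e across[OF edges X s(2), of e y w] across[OF edges(2,1) X' s(1), of e y w] by blast
    qed (use step.IH in blast)
  qed simp
qed

lemma reach_Un_parallel:
  assumes "\<forall>e\<in>A1. inc e \<subseteq> V1" "\<forall>e\<in>A2. inc e \<subseteq> V2" "V1 \<inter> V2 = {s, t}"
  shows "reach inc (A1 \<union> A2) s t \<longleftrightarrow> reach inc A1 s t \<or> reach inc A2 s t"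
  using reach_Un_from_terminal[OF assms(1,2), of s t t] assms(3)
  by (auto intro: reach_mono[OF Un_upper1] reach_mono[OF Un_upper2])

lemma attached_Un_parallel:
  assumes "\<forall>e\<in>A1. inc e \<subseteq> V1" "\<forall>e\<in>A2. inc e \<subseteq> V2" "V1 \<inter> V2 = {s, t}"
  shows "attached inc (V1 \<union> V2) (A1 \<union> A2) s t \<longleftrightarrow>
    attached inc V1 A1 s t \<and> attached inc V2 A2 s t"
proof -
  have "attached inc V1 A1 s t"
    if "attached inc (V1 \<union> V2) (A1 \<union> A2) s t" "\<forall>e\<in>A1. inc e \<subseteq> V1" "\<forall>e\<in>A2. inc e \<subseteq> V2"
      "V1 \<inter> V2 = {s, t}"
    for A1 A2 V1 V2
    unfolding attached_def
  proof
    fix v assume v: "v \<in> V1"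
    then have "reach inc (A1 \<union> A2) v s \<or> reach inc (A1 \<union> A2) v t"
      using that(1) unfolding attached_def by blast
    then show "reach inc A1 v s \<or> reach inc A1 v t"
      using reach_Un_cases[OF _ v that(2,3)] that(4) by auto
  qed
  from this[of V1 V2 A1 A2] this[of V2 V1 A2 A1] assms show ?thesis
    unfolding attached_def
    by (auto simp: Int_commute Un_commute intro: reach_mono[OF Un_upper1] reach_mono[OF Un_upper2])
qed

lemma conn_Un_series:
  assumes "\<forall>e\<in>A1. inc e \<subseteq> V1" "\<forall>e\<in>A2. inc e \<subseteq> V2" "V1 \<inter> V2 = {x}"
  shows "conn inc (V1 \<union> V2) (A1 \<union> A2) \<longleftrightarrow> conn inc V1 A1 \<and> conn inc V2 A2"
proof -
  have "x \<in> V1" "x \<in> V2" using assms(3) by auto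
  then show ?thesis
    using attached_Un_series[OF assms \<open>x \<in> V1\<close> \<open>x \<in> V2\<close>]
      conn_iff_attached[of x "V1 \<union> V2" x inc "A1 \<union> A2"]
      conn_iff_attached[of x V1 x inc A1] conn_iff_attached[of x V2 x inc A2]
    by simp
qed

lemma st_split_Un_series:
  assumes "\<forall>e\<in>A1. inc e \<subseteq> V1" "\<forall>e\<in>A2. inc e \<subseteq> V2" "V1 \<inter> V2 = {t}"
    and "s \<in> V1" "t' \<in> V2"
  shows "st_split inc (V1 \<union> V2) (A1 \<union> A2) s t' \<longleftrightarrow>
    conn inc V1 A1 \<and> st_split inc V2 A2 t t' \<or> st_split inc V1 A1 s t \<and> conn inc V2 A2"
proof -
  have "t \<in> V1" "t \<in> V2" using assms(3) by auto
  then show ?thesis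
    using attached_Un_series[OF assms] reach_Un_series_cross[OF assms(1-3) assms(4,5)]
      conn_iff_attached[of s V1 t] conn_iff_attached[of t V2 t'] assms(4,5)
    unfolding st_split_def by blast
qed

lemma conn_Un_parallel:
  assumes "\<forall>e\<in>A1. inc e \<subseteq> V1" "\<forall>e\<in>A2. inc e \<subseteq> V2" "V1 \<inter> V2 = {s, t}"
  shows "conn inc (V1 \<union> V2) (A1 \<union> A2) \<longleftrightarrow>
    conn inc V1 A1 \<and> conn inc V2 A2 \<or> conn inc V1 A1 \<and> st_split inc V2 A2 s t \<or>
    st_split inc V1 A1 s t \<and> conn inc V2 A2"
proof -
  have "s \<in> V1" "t \<in> V1" "s \<in> V2" "t \<in> V2" using assms(3) by auto
  then show ?thesis
    using attached_Un_parallel[OF assms] reach_Un_parallel[OF assms]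
      conn_iff_attached[of s "V1 \<union> V2" t] conn_iff_attached[of s V1 t] conn_iff_attached[of s V2 t]
    unfolding st_split_def by blast
qed

lemma st_split_Un_parallel:
  assumes "\<forall>e\<in>A1. inc e \<subseteq> V1" "\<forall>e\<in>A2. inc e \<subseteq> V2" "V1 \<inter> V2 = {s, t}"
  shows "st_split inc (V1 \<union> V2) (A1 \<union> A2) s t \<longleftrightarrow>
    st_split inc V1 A1 s t \<and> st_split inc V2 A2 s t"
  using attached_Un_parallel[OF assms] reach_Un_parallel[OF assms]
  unfolding st_split_def by blast

section \<open>Weights of edge sets\<close>

definition weight :: "complex \<Rightarrow> 'e set \<Rightarrow> ('e set \<Rightarrow> bool) \<Rightarrow> complex" where
  "weight q E P = (\<Sum>A | A \<subseteq> E \<and> P A. (1 - q) ^ card A * q ^ (card E - card A))"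

lemma weight_cong: "(\<And>A. A \<subseteq> E \<Longrightarrow> P A \<longleftrightarrow> Q A) \<Longrightarrow> weight q E P = weight q E Q"
  unfolding weight_def by (metis (mono_tags, lifting))

lemma weight_empty: "weight q {} P = (if P {} then 1 else 0)"
proof -
  have "{A. A \<subseteq> {} \<and> P A} = (if P {} then {{}} else {})" by auto
  then show ?thesis unfolding weight_def by simp
qed

lemma weight_singleton: "weight q {e} P = (if P {} then q else 0) + (if P {e} then 1 - q else 0)"
proof -
  have "{A. A \<subseteq> {e} \<and> P A} = (if P {} then {{}} else {}) \<union> (if P {e} then {{e}} else {})"
    by (auto simp: subset_singleton_iff)
  then show ?thesis
    unfolding weight_def by (simp add: sum.union_disjoint)
qed

lemma weight_disj:
  assumes "finite E" "\<And>A. A \<subseteq> E \<Longrightarrow> \<not> (P A \<and> Q A)"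
  shows "weight q E (\<lambda>A. P A \<or> Q A) = weight q E P + weight q E Q"
proof -
  have "{A. A \<subseteq> E \<and> (P A \<or> Q A)} = {A. A \<subseteq> E \<and> P A} \<union> {A. A \<subseteq> E \<and> Q A}" by blast
  moreover have "finite {A. A \<subseteq> E \<and> P A}" "finite {A. A \<subseteq> E \<and> Q A}"
    using assms(1) by simp_all
  ultimately show ?thesis
    unfolding weight_def using assms(2) by (subst sum.union_disjoint[symmetric]) auto
qed

lemma weight_Un:
  assumes "finite E1" "finite E2" "E1 \<inter> E2 = {}"
    and "\<And>A1 A2. A1 \<subseteq> E1 \<Longrightarrow> A2 \<subseteq> E2 \<Longrightarrow> P (A1 \<union> A2) \<longleftrightarrow> P1 A1 \<and> P2 A2"
  shows "weight q (E1 \<union> E2) P = weight q E1 P1 * weight q E2 P2"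
proof -
  let ?w = "\<lambda>E A. (1 - q) ^ card A * q ^ (card E - card A)"
  let ?S1 = "{A. A \<subseteq> E1 \<and> P1 A}" and ?S2 = "{A. A \<subseteq> E2 \<and> P2 A}"
  have parts: "(A1 \<union> A2) \<inter> E1 = A1" "(A1 \<union> A2) \<inter> E2 = A2" if "A1 \<subseteq> E1" "A2 \<subseteq> E2" for A1 A2
    using that assms(3) by auto
  have image: "{A. A \<subseteq> E1 \<union> E2 \<and> P A} = (\<lambda>(A1, A2). A1 \<union> A2) ` (?S1 \<times> ?S2)"
  proof (intro equalityI subsetI)
    fix A assume A: "A \<in> {A. A \<subseteq> E1 \<union> E2 \<and> P A}"
    then have "A = (A \<inter> E1) \<union> (A \<inter> E2)" by blast
    with A assms(4)[of "A \<inter> E1" "A \<inter> E2"] show "A \<in> (\<lambda>(A1, A2). A1 \<union> A2) ` (?S1 \<times> ?S2)"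
      by (intro image_eqI[of _ _ "(A \<inter> E1, A \<inter> E2)"]) auto
  qed (auto simp: assms(4))
  have inj: "inj_on (\<lambda>(A1, A2). A1 \<union> A2) (?S1 \<times> ?S2)"
    by (rule inj_onI) (clarsimp, metis parts)
  have w: "?w (E1 \<union> E2) (A1 \<union> A2) = ?w E1 A1 * ?w E2 A2" if "A1 \<subseteq> E1" "A2 \<subseteq> E2" for A1 A2
  proof -
    have "finite A1" "finite A2" using that assms(1,2) finite_subset by auto
    then have c: "card (A1 \<union> A2) = card A1 + card A2"
      using that assms(3) by (intro card_Un_disjoint) auto
    have "card A1 \<le> card E1" "card A2 \<le> card E2"
      using that assms(1,2) card_mono by auto
    then have "card (E1 \<union> E2) - card (A1 \<union> A2) = (card E1 - card A1) + (card E2 - card A2)"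
      using c card_Un_disjoint[OF assms(1-3)] by simp
    then show ?thesis by (simp add: c power_add algebra_simps)
  qed
  have "weight q (E1 \<union> E2) P = (\<Sum>(A1, A2)\<in>?S1 \<times> ?S2. ?w (E1 \<union> E2) (A1 \<union> A2))"
    unfolding weight_def image by (subst sum.reindex[OF inj]) (simp add: case_prod_unfold)
  also have "\<dots> = (\<Sum>A1\<in>?S1. \<Sum>A2\<in>?S2. ?w E1 A1 * ?w E2 A2)"
    unfolding sum.cartesian_product[symmetric] by (intro sum.cong refl) (auto simp: w)
  also have "\<dots> = weight q E1 P1 * weight q E2 P2"
    unfolding weight_def by (simp add: sum_product)
  finally show ?thesis .
qed

lemma weight_Un_disj:
  assumes "finite E1" "finite E2" "E1 \<inter> E2 = {}"
    and "\<And>A1 A2. A1 \<subseteq> E1 \<Longrightarrow> A2 \<subseteq> E2 \<Longrightarrow>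
      P (A1 \<union> A2) \<longleftrightarrow> P1 A1 \<and> P2 A2 \<or> Q1 A1 \<and> Q2 A2"
    and "\<And>A1. A1 \<subseteq> E1 \<Longrightarrow> \<not> (P1 A1 \<and> Q1 A1)"
  shows "weight q (E1 \<union> E2) P = weight q E1 P1 * weight q E2 P2 + weight q E1 Q1 * weight q E2 Q2"
proof -
  have parts: "(A1 \<union> A2) \<inter> E1 = A1" "(A1 \<union> A2) \<inter> E2 = A2" if "A1 \<subseteq> E1" "A2 \<subseteq> E2" for A1 A2
    using that assms(3) by auto
  have "weight q (E1 \<union> E2) P =
      weight q (E1 \<union> E2) (\<lambda>A. P1 (A \<inter> E1) \<and> P2 (A \<inter> E2) \<or> Q1 (A \<inter> E1) \<and> Q2 (A \<inter> E2))"
  proof (rule weight_cong)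
    fix A assume "A \<subseteq> E1 \<union> E2"
    then have "A = (A \<inter> E1) \<union> (A \<inter> E2)" by blast
    then show "P A \<longleftrightarrow> P1 (A \<inter> E1) \<and> P2 (A \<inter> E2) \<or> Q1 (A \<inter> E1) \<and> Q2 (A \<inter> E2)"
      using assms(4)[of "A \<inter> E1" "A \<inter> E2"] by auto
  qed
  also have "\<dots> = weight q (E1 \<union> E2) (\<lambda>A. P1 (A \<inter> E1) \<and> P2 (A \<inter> E2)) +
      weight q (E1 \<union> E2) (\<lambda>A. Q1 (A \<inter> E1) \<and> Q2 (A \<inter> E2))"
    using assms(1,2,5) by (intro weight_disj) auto
  also have "\<dots> = weight q E1 P1 * weight q E2 P2 + weight q E1 Q1 * weight q E2 Q2"
    using assms(1-3) by (simp add: weight_Un parts)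
  finally show ?thesis .
qed

text \<open>conn_weight and split_weight are the values R and S at q.\<close>

abbreviation conn_weight :: "complex \<Rightarrow> ('e \<Rightarrow> 'v set) \<Rightarrow> 'v set \<Rightarrow> 'e set \<Rightarrow> complex" where
  "conn_weight q inc V E \<equiv> weight q E (conn inc V)"

abbreviation split_weight ::
    "complex \<Rightarrow> ('e \<Rightarrow> 'v set) \<Rightarrow> 'v set \<Rightarrow> 'e set \<Rightarrow> 'v \<Rightarrow> 'v \<Rightarrow> complex" where
  "split_weight q inc V E s t \<equiv> weight q E (\<lambda>A. st_split inc V A s t)"

context
  fixes inc :: "'e \<Rightarrow> 'v set" and E1 E2 :: "'e set" and V1 V2 :: "'v set"
  assumes finite: "finite E1" "finite E2" and disjoint: "E1 \<inter> E2 = {}"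
    and edges: "\<forall>e\<in>E1. inc e \<subseteq> V1" "\<forall>e\<in>E2. inc e \<subseteq> V2"
begin

lemma conn_weight_Un_series:
  assumes "V1 \<inter> V2 = {x}"
  shows "conn_weight q inc (V1 \<union> V2) (E1 \<union> E2) = conn_weight q inc V1 E1 * conn_weight q inc V2 E2"
  using edges by (intro weight_Un[OF finite disjoint] conn_Un_series[OF _ _ assms]) blast+

lemma split_weight_Un_series:
  assumes "V1 \<inter> V2 = {t}" "s \<in> V1" "t' \<in> V2"
  shows "split_weight q inc (V1 \<union> V2) (E1 \<union> E2) s t' =
    conn_weight q inc V1 E1 * split_weight q inc V2 E2 t t' +
    split_weight q inc V1 E1 s t * conn_weight q inc V2 E2"
proof -
  have "t \<in> V1" using assms(1) by blast
  then show ?thesis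
    using edges not_conn_and_st_split[OF assms(2)]
    by (intro weight_Un_disj[OF finite disjoint] st_split_Un_series[OF _ _ assms]) blast+
qed

lemma conn_weight_Un_parallel:
  assumes "V1 \<inter> V2 = {s, t}"
  shows "conn_weight q inc (V1 \<union> V2) (E1 \<union> E2) =
    conn_weight q inc V1 E1 * (conn_weight q inc V2 E2 + split_weight q inc V2 E2 s t) +
    split_weight q inc V1 E1 s t * conn_weight q inc V2 E2"
proof -
  have st: "s \<in> V1" "t \<in> V1" "s \<in> V2" "t \<in> V2" using assms by auto
  have "conn_weight q inc (V1 \<union> V2) (E1 \<union> E2) =
      conn_weight q inc V1 E1 * weight q E2 (\<lambda>A. conn inc V2 A \<or> st_split inc V2 A s t) +
      split_weight q inc V1 E1 s t * conn_weight q inc V2 E2"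
  proof (rule weight_Un_disj[OF finite disjoint])
    fix A1 A2 assume "A1 \<subseteq> E1" "A2 \<subseteq> E2"
    then show "conn inc (V1 \<union> V2) (A1 \<union> A2) \<longleftrightarrow>
        conn inc V1 A1 \<and> (conn inc V2 A2 \<or> st_split inc V2 A2 s t) \<or>
        st_split inc V1 A1 s t \<and> conn inc V2 A2"
      using conn_Un_parallel[of A1 inc V1 A2 V2 s t] edges assms by blast
  qed (use not_conn_and_st_split[OF st(1,2)] in blast)
  also have "weight q E2 (\<lambda>A. conn inc V2 A \<or> st_split inc V2 A s t) =
      conn_weight q inc V2 E2 + split_weight q inc V2 E2 s t"
    using not_conn_and_st_split[OF st(3,4)] by (intro weight_disj[OF finite(2)]) blast
  finally show ?thesis .
qed

lemma split_weight_Un_parallel: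
  assumes "V1 \<inter> V2 = {s, t}"
  shows "split_weight q inc (V1 \<union> V2) (E1 \<union> E2) s t =
    split_weight q inc V1 E1 s t * split_weight q inc V2 E2 s t"
  using edges by (intro weight_Un[OF finite disjoint] st_split_Un_parallel[OF _ _ assms]) blast+

end

section \<open>Series-parallel networks\<close>

lemma sp_wf: "sp V E inc s t \<Longrightarrow> finite E \<and> s \<in> V \<and> t \<in> V \<and> (\<forall>e\<in>E. inc e \<subseteq> V)"
  by (induction rule: sp.induct) fastforce+

lemma sp_cong: "sp V E inc s t \<Longrightarrow> \<forall>e\<in>E. inc' e = inc e \<Longrightarrow> sp V E inc' s t"
proof (induction arbitrary: inc' rule: sp.induct)
  case (series V E inc s t V' E' inc' t' inc'')
  then show ?case by (intro sp.series[of V E inc s t V' E' inc' t']) auto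
next
  case (parallel V E inc s t V' E' inc' inc'')
  then show ?case by (intro sp.parallel[of V E inc s t V' E' inc']) auto
qed (auto intro: sp.intros)

text \<open>The rules of sp let the parts of a network carry different incidence maps that only agree
  on their own edges; this induction rule works with a single one.\<close>
lemma sp_induct_same_inc [consumes 1, case_names edge swap series parallel]:
  assumes "sp V E inc s t"
    and "\<And>s t e. s \<noteq> t \<Longrightarrow> inc e = {s, t} \<Longrightarrow> P {s, t} {e} s t"
    and "\<And>V E s t. sp V E inc s t \<Longrightarrow> P V E s t \<Longrightarrow> P V E t s"
    and "\<And>V E s t V' E' t'. sp V E inc s t \<Longrightarrow> P V E s t \<Longrightarrow>
      sp V' E' inc t t' \<Longrightarrow> P V' E' t t' \<Longrightarrow> E \<inter> E' = {} \<Longrightarrow> V \<inter> V' = {t} \<Longrightarrow>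
      P (V \<union> V') (E \<union> E') s t'"
    and "\<And>V E s t V' E'. sp V E inc s t \<Longrightarrow> P V E s t \<Longrightarrow>
      sp V' E' inc s t \<Longrightarrow> P V' E' s t \<Longrightarrow> E \<inter> E' = {} \<Longrightarrow> V \<inter> V' = {s, t} \<Longrightarrow>
      P (V \<union> V') (E \<union> E') s t"
  shows "P V E s t"
proof -
  have "\<forall>e\<in>E. inc e = inc0 e \<Longrightarrow> P V E s t" if "sp V E inc0 s t" for inc0
    using that
  proof (induction rule: sp.induct)
    case (edge s t inc0 e)
    then show ?case by (intro assms(2)) auto
  next
    case (swap V E inc0 s t)
    then show ?case using sp_cong assms(3) by metis
  next
    case (series V E inc1 s t V' E' inc2 t' inc0)
    then have agree: "\<forall>e\<in>E. inc e = inc1 e" "\<forall>e\<in>E'. inc e = inc2 e" by auto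
    have "sp V E inc s t" "P V E s t" "sp V' E' inc t t'" "P V' E' t t'"
      using sp_cong[OF series.hyps(1) agree(1)] sp_cong[OF series.hyps(2) agree(2)] series.IH agree
      by auto
    then show ?case using series.hyps(3,4) by (rule assms(4))
  next
    case (parallel V E inc1 s t V' E' inc2 inc0)
    then have agree: "\<forall>e\<in>E. inc e = inc1 e" "\<forall>e\<in>E'. inc e = inc2 e" by auto
    have "sp V E inc s t" "P V E s t" "sp V' E' inc s t" "P V' E' s t"
      using sp_cong[OF parallel.hyps(1) agree(1)] sp_cong[OF parallel.hyps(2) agree(2)]
        parallel.IH agree
      by auto
    then show ?case using parallel.hyps(3,4) by (rule assms(5))
  qed
  then show ?thesis using assms(1) by blast
qed

lemma norm_add_less_norm_iff:
  assumes "R \<noteq> 0"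
  shows "cmod (R + S) < cmod S \<longleftrightarrow> Re (S / R) < - 1 / 2"
proof -
  let ?z = "S / R"
  have "cmod (R + S) < cmod S \<longleftrightarrow> cmod R * cmod (1 + ?z) < cmod R * cmod ?z"
    using assms by (simp add: norm_mult[symmetric] distrib_left)
  also have "\<dots> \<longleftrightarrow> cmod (1 + ?z) < cmod ?z"
    using assms by simp
  also have "\<dots> \<longleftrightarrow> (Re (1 + ?z))\<^sup>2 + (Im (1 + ?z))\<^sup>2 < (Re ?z)\<^sup>2 + (Im ?z)\<^sup>2"
    unfolding cmod_def by (rule real_sqrt_less_iff)
  also have "\<dots> \<longleftrightarrow> Re ?z < - 1 / 2"
    by (simp add: power2_eq_square algebra_simps) linarith
  finally show ?thesis .
qed

lemma split_dominates_series:
  assumes "cmod (R1 + S1) < cmod S1" "cmod (R2 + S2) < cmod S2"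
  shows "cmod (R1 * R2 + (R1 * S2 + S1 * R2)) < cmod (R1 * S2 + S1 * R2)"
proof -
  have R: "R1 \<noteq> 0" "R2 \<noteq> 0" using assms by auto
  have "(R1 * S2 + S1 * R2) / (R1 * R2) = S1 / R1 + S2 / R2"
    using R by (simp add: field_simps)
  then have "Re ((R1 * S2 + S1 * R2) / (R1 * R2)) < - 1 / 2"
    using assms norm_add_less_norm_iff[OF R(1)] norm_add_less_norm_iff[OF R(2)] by simp
  then show ?thesis
    using norm_add_less_norm_iff[of "R1 * R2"] R by simp
qed

lemma split_dominates_parallel:
  assumes "cmod (R1 + S1) < cmod S1" "cmod (R2 + S2) < cmod S2"
  shows "cmod (R1 * (R2 + S2) + S1 * R2 + S1 * S2) < cmod (S1 * S2)"
proof -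
  have "cmod (R1 * (R2 + S2) + S1 * R2 + S1 * S2) = cmod (R1 + S1) * cmod (R2 + S2)"
    by (simp add: norm_mult[symmetric] algebra_simps)
  also have "\<dots> < cmod S1 * cmod S2"
    using assms by (intro mult_strict_mono) auto
  finally show ?thesis by (simp add: norm_mult)
qed

lemma sp_split_weight_dominates:
  assumes "sp V E inc s t" "1 < cmod q"
  shows "cmod (conn_weight q inc V E + split_weight q inc V E s t) < cmod (split_weight q inc V E s t)"
  using assms(1)
proof (induction rule: sp_induct_same_inc)
  case (edge s t e)
  then have "conn_weight q inc {s, t} {e} = 1 - q" "split_weight q inc {s, t} {e} s t = q"
    by (auto simp: weight_singleton conn_def st_split_def attached_def reach_empty
        intro: reach_edge reach_sym)
  then show ?case using assms(2) by simp
next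
  case (swap V E s t)
  then show ?case by (simp add: st_split_commute)
next
  case (series V E s t V' E' t')
  have E: "finite E" "\<forall>e\<in>E. inc e \<subseteq> V" "s \<in> V"
    and E': "finite E'" "\<forall>e\<in>E'. inc e \<subseteq> V'" "t' \<in> V'"
    using sp_wf[OF series.hyps(1)] sp_wf[OF series.hyps(2)] by auto
  show ?case
    unfolding conn_weight_Un_series[OF E(1) E'(1) series.hyps(3) E(2) E'(2) series.hyps(4)]
      split_weight_Un_series[OF E(1) E'(1) series.hyps(3) E(2) E'(2) series.hyps(4) E(3) E'(3)]
    by (rule split_dominates_series[OF series.IH])
next
  case (parallel V E s t V' E')
  have E: "finite E" "\<forall>e\<in>E. inc e \<subseteq> V" and E': "finite E'" "\<forall>e\<in>E'. inc e \<subseteq> V'"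
    using sp_wf[OF parallel.hyps(1)] sp_wf[OF parallel.hyps(2)] by auto
  show ?case
    unfolding conn_weight_Un_parallel[OF E(1) E'(1) parallel.hyps(3) E(2) E'(2) parallel.hyps(4)]
      split_weight_Un_parallel[OF E(1) E'(1) parallel.hyps(3) E(2) E'(2) parallel.hyps(4)]
    by (rule split_dominates_parallel[OF parallel.IH])
qed

section \<open>Blocks\<close>

lemma verts_Un: "verts inc (F1 \<union> F2) = verts inc F1 \<union> verts inc F2"
  unfolding verts_def by blast

lemma inc_subset_verts: "\<forall>e\<in>F. inc e \<subseteq> verts inc F"
  unfolding verts_def by blast

lemma reach_imp_in_verts: "reach inc A v u \<Longrightarrow> v \<noteq> u \<Longrightarrow> v \<in> verts inc A"
  unfolding reach_def verts_def by (erule converse_rtranclpE) auto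

lemma is_block_Un_cut_vertex:
  assumes "is_block F1 inc B" "F1 \<inter> F2 = {}" "verts inc F1 \<inter> verts inc F2 \<subseteq> {x}"
  shows "is_block (F1 \<union> F2) inc B"
proof -
  have B: "B \<subseteq> F1" "nonseparable inc B"
    using assms(1) unfolding is_block_def by simp_all
  then have "B \<noteq> {}" unfolding nonseparable_def by simp
  have "F' = B" if F': "B \<subseteq> F'" "F' \<subseteq> F1 \<union> F2" "nonseparable inc F'" for F'
  proof (cases "F' \<inter> F2 = {}")
    case True
    then show ?thesis using assms(1) F' unfolding is_block_def by blast
  next
    case False
    have "verts inc (F' \<inter> F1) \<inter> verts inc (F' \<inter> F2) \<subseteq> {x}"
      using assms(3) unfolding verts_def by blast
    then have "card (verts inc (F' \<inter> F1) \<inter> verts inc (F' \<inter> F2)) \<le> 1"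
      using card_mono[of "{x}"] by simp
    moreover have "(F' \<inter> F1) \<union> (F' \<inter> F2) = F'" "(F' \<inter> F1) \<inter> (F' \<inter> F2) = {}" "F' \<inter> F1 \<noteq> {}"
      using F'(1,2) B(1) \<open>B \<noteq> {}\<close> assms(2) by blast+
    ultimately show ?thesis
      using F'(3) False unfolding nonseparable_def by blast
  qed
  then show ?thesis unfolding is_block_def using B by blast
qed

lemma separable_has_cut_vertex:
  assumes "\<forall>e\<in>F. finite (inc e) \<and> inc e \<noteq> {}" "finite F" "F \<noteq> {}"
    and "conn inc (verts inc F) F" "\<not> nonseparable inc F"
  obtains F1 F2 x where "F1 \<union> F2 = F" "F1 \<inter> F2 = {}" "F1 \<noteq> {}" "F2 \<noteq> {}"
    "verts inc F1 \<inter> verts inc F2 = {x}"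
proof -
  have "verts inc F \<noteq> {}" using assms(1,3) unfolding verts_def by blast
  then obtain F1 F2 where F: "F1 \<union> F2 = F" "F1 \<inter> F2 = {}" "F1 \<noteq> {}" "F2 \<noteq> {}"
    and cut: "card (verts inc F1 \<inter> verts inc F2) \<le> 1"
    using assms(3-5) unfolding nonseparable_def mg_connected_iff_conn by blast
  obtain u v where u: "u \<in> verts inc F1" and v: "v \<in> verts inc F2"
    using F(3,4) assms(1) F(1) unfolding verts_def by blast
  have "reach inc (F1 \<union> F2) u v"
    using assms(4) u v unfolding conn_def F(1)[symmetric] verts_Un by blast
  then have "reach inc F1 u v \<or> (\<exists>z\<in>verts inc F1 \<inter> verts inc F2. reach inc F1 u z)"
    using reach_Un_cases[OF _ u inc_subset_verts inc_subset_verts] by blast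
  then obtain x where x: "x \<in> verts inc F1 \<inter> verts inc F2"
    using reach_closed[OF _ u inc_subset_verts] v by blast
  moreover have "finite (verts inc F1 \<inter> verts inc F2)"
    using assms(1,2) F(1) unfolding verts_def by blast
  ultimately have "verts inc F1 \<inter> verts inc F2 = {x}"
    using cut card_le_Suc0_iff_eq by fastforce
  with F show ?thesis using that by blast
qed

lemma conn_weight_nonzero:
  assumes "\<forall>e\<in>F. finite (inc e) \<and> inc e \<noteq> {}" "finite F" "conn inc (verts inc F) F"
    and "\<forall>B. is_block F inc B \<longrightarrow> (\<exists>s t. sp (verts inc B) B inc s t)" "1 < cmod q"
  shows "conn_weight q inc (verts inc F) F \<noteq> 0"
  using assms(1-4)
proof (induction "card F" arbitrary: F rule: less_induct)
  case less
  consider "F = {}" | "nonseparable inc F" | "F \<noteq> {}" "\<not> nonseparable inc F" by blast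
  then show ?case
  proof cases
    case 1
    then show ?thesis by (simp add: weight_empty conn_def verts_def)
  next
    case 2
    then have "is_block F inc F" unfolding is_block_def by blast
    then obtain s t where "sp (verts inc F) F inc s t" using less.prems(4) by blast
    from sp_split_weight_dominates[OF this assms(5)] show ?thesis by auto
  next
    case 3
    then obtain F1 F2 x where F: "F1 \<union> F2 = F" "F1 \<inter> F2 = {}" "F1 \<noteq> {}" "F2 \<noteq> {}"
      and cut: "verts inc F1 \<inter> verts inc F2 = {x}"
      using separable_has_cut_vertex less.prems(1-3) by metis
    have edges: "\<forall>e\<in>F1. inc e \<subseteq> verts inc F1" "\<forall>e\<in>F2. inc e \<subseteq> verts inc F2"
      by (rule inc_subset_verts)+
    have "finite F1" "finite F2" using less.prems(2) F(1) by auto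
    then have product: "conn_weight q inc (verts inc F) F =
        conn_weight q inc (verts inc F1) F1 * conn_weight q inc (verts inc F2) F2"
      unfolding F(1)[symmetric] verts_Un by (rule conn_weight_Un_series[OF _ _ F(2) edges cut])
    have conn: "conn inc (verts inc F1) F1" "conn inc (verts inc F2) F2"
      using conn_Un_series[OF edges cut] less.prems(3) unfolding F(1)[symmetric] verts_Un by simp_all
    have part: "conn_weight q inc (verts inc G) G \<noteq> 0"
      if "G \<union> H = F" "G \<inter> H = {}" "H \<noteq> {}" "verts inc G \<inter> verts inc H = {x}"
        and "conn inc (verts inc G) G" for G H
    proof (rule less.hyps)
      show "card G < card F"
        using that(1-3) less.prems(2) by (intro psubset_card_mono) auto
      show "\<forall>e\<in>G. finite (inc e) \<and> inc e \<noteq> {}" "finite G"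
        using that(1) less.prems(1,2) by auto
      show "\<forall>B. is_block G inc B \<longrightarrow> (\<exists>s t. sp (verts inc B) B inc s t)"
        using is_block_Un_cut_vertex[of G inc _ H x] that(1,2,4) less.prems(4) by blast
    qed (fact that(5))
    have "conn_weight q inc (verts inc F1) F1 \<noteq> 0"
      using part[OF F(1,2,4) cut conn(1)] .
    moreover have "conn_weight q inc (verts inc F2) F2 \<noteq> 0"
      using part[of F2 F1] F(1,2,3) cut conn(2) by (simp add: Un_commute Int_commute)
    ultimately show ?thesis using product by simp
  qed
qed

lemma conn_eq_verts:
  assumes "conn inc V E" "\<forall>e\<in>E. inc e \<subseteq> V" "\<forall>e\<in>E. inc e \<noteq> {}" "E \<noteq> {}"
  shows "V = verts inc E"
proof
  obtain e u where "e \<in> E" "u \<in> inc e" using assms(3,4) by blast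
  then have u: "u \<in> V" "u \<in> verts inc E" using assms(2) unfolding verts_def by blast+
  show "V \<subseteq> verts inc E"
  proof
    fix v assume "v \<in> V"
    then have "reach inc E v u" using assms(1) u(1) unfolding conn_def by blast
    then show "v \<in> verts inc E" using u(2) reach_imp_in_verts by metis
  qed
qed (use assms(2) in \<open>auto simp: verts_def\<close>)

lemma poly_reliability: "poly (reliability V E inc) q = weight q E (\<lambda>A. mg_connected V A inc)"
  unfolding reliability_def weight_def by (simp add: poly_sum)

lemma SP'_reliability_nonzero:
  assumes "SP' V E inc" "1 < cmod q"
  shows "poly (reliability V E inc) q \<noteq> 0"
proof -
  have mg: "finite E" "\<forall>e\<in>E. inc e \<subseteq> V \<and> (card (inc e) = 1 \<or> card (inc e) = 2)"
    using assms(1) unfolding SP'_def multigraph_def by simp_all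
  then have "0 < card (inc e)" if "e \<in> E" for e using that by auto
  then have E: "finite E" "\<forall>e\<in>E. inc e \<subseteq> V" "\<forall>e\<in>E. finite (inc e) \<and> inc e \<noteq> {}"
    using mg by (auto simp: card_gt_0_iff)
  have V: "V \<noteq> {}" "conn inc V E"
    using assms(1) unfolding SP'_def mg_connected_iff_conn by simp_all
  have blocks: "\<forall>B. is_block E inc B \<longrightarrow> (\<exists>s t. sp (verts inc B) B inc s t)"
    using assms(1) unfolding SP'_def by blast
  have "poly (reliability V E inc) q = conn_weight q inc V E"
    unfolding poly_reliability mg_connected_iff_conn using V(1) by simp
  also have "\<dots> \<noteq> 0"
  proof (cases "E = {}")
    case True
    then show ?thesis using V(2) by (simp add: weight_empty)
  next
    case False
    then have "V = verts inc E" using conn_eq_verts V(2) E(2,3) by blast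
    then show ?thesis using conn_weight_nonzero[OF E(3,1) _ blocks assms(2)] V(2) by simp
  qed
  finally show ?thesis .
qed

theorem theorem0p2:
  fixes V :: "'v set" and E :: "'e set" and inc :: "'e \<Rightarrow> 'v set"
  assumes "SP' V E inc"
  shows "\<forall>q::complex. poly (reliability V E inc) q = 0 \<longrightarrow> cmod q \<le> 1"
  using SP'_reliability_nonzero[OF assms] by (meson not_le)

end
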